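(* Let $r\ge2$ and $p\ge2$ be integers, let $\mathcal{A}$ be the adjacency tensor of an $r$-uniform (possibly weighted) hypergraph on $n$ vertices, and let $f(\mathbf{x})=(r-1)!\,\mathcal{A}\mathbf{x}^r/\|\mathbf{x}\|_p^r$ for $\mathbf{x}\neq0$. Let $\mathbf{x}_k\in\mathbb{R}^n$ with $\|\mathbf{x}_k\|_2=1$, $\mathbf{p}_k\in\mathbb{R}^n$, and for $\alpha>0$ let $$\mathbf{x}_{k+1}(\alpha)=\frac{[(2-\alpha\mathbf{x}_k^\top\mathbf{p}_k)^2-\|\alpha\mathbf{p}_k\|^2]\mathbf{x}_k+4\alpha\mathbf{p}_k}{4+\|\alpha\mathbf{p}_k\|^2-(\alpha\mathbf{x}_k^\top\mathbf{p}_k)^2}.$$ Writing $f'(\alpha)$ for the derivative of $\alpha\mapsto f(\mathbf{x}_{k+1}(\alpha))$, we have $$\alpha f'(\alpha)=-\nabla f(\mathbf{x}_{k+1}(\alpha))^\top\mathbf{x}_k.$$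
   Context: For a weighted $r$-uniform hypergraph $G=(V,E)$ with $V=\{1,\dots,n\}$ and edge weights $s(e)>0$, the adjacency tensor $\mathcal{A}=(a_{i_1\cdots i_r})$ is the symmetric order-$r$, dimension-$n$ tensor with $a_{i_1\cdots i_r}=s(e)/(r-1)!$ if $\{i_1,\dots,i_r\}=e\in E$ and $0$ otherwise. $\mathcal{A}\mathbf{x}^r=\sum_{i_1,\dots,i_r}a_{i_1\cdots i_r}x_{i_1}\cdots x_{i_r}$ and $(\mathcal{A}\mathbf{x}^{r-1})_i=\sum_{i_2,\dots,i_r}a_{ii_2\cdots i_r}x_{i_2}\cdots x_{i_r}$. $\|\mathbf{x}\|_p=(\sum_i|x_i|^p)^{1/p}$ and $\|\cdot\|$ is the Euclidean norm. The gradient is $\nabla f(\mathbf{x})=\frac{r!}{\|\mathbf{x}\|_p^r}\big(\mathcal{A}\mathbf{x}^{r-1}-\mathcal{A}\mathbf{x}^r\|\mathbf{x}\|_p^{-p}\mathbf{x}^{\langle p-1\rangle}\big)$, where $(\mathbf{x}^{\langle p-1\rangle})_i=|x_i|^{p-1}\mathrm{sgn}(x_i)$. The vector $\mathbf{x}_{k+1}(\alpha)$ is a unit vector. *)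

theory Defs
  imports "HOL-Analysis.Analysis"
begin

text \<open>Weighted r-uniform hypergraph on the vertex type 'n (vertices = elements of the
finite type 'n, so n = CARD('n)); edges E are r-element vertex sets, weights s e > 0.\<close>

definition weighted_uniform_hypergraph :: "nat \<Rightarrow> 'n set set \<Rightarrow> ('n set \<Rightarrow> real) \<Rightarrow> bool" where
  "weighted_uniform_hypergraph r E s \<longleftrightarrow> (\<forall>e\<in>E. card e = r \<and> s e > 0)"

definition adj_entry :: "nat \<Rightarrow> 'n set set \<Rightarrow> ('n set \<Rightarrow> real) \<Rightarrow> (nat \<Rightarrow> 'n) \<Rightarrow> real" where
  "adj_entry r E s i = (if i ` {0..<r} \<in> E then s (i ` {0..<r}) / fact (r - 1) else 0)"

definition tensor_form :: "nat \<Rightarrow> 'n::finite set set \<Rightarrow> ('n set \<Rightarrow> real) \<Rightarrow> real^'n \<Rightarrow> real" where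
  "tensor_form r E s x =
     (\<Sum>i\<in>PiE {0..<r} (\<lambda>_. UNIV). adj_entry r E s i * (\<Prod>j<r. x $ i j))"

definition tensor_vec :: "nat \<Rightarrow> 'n::finite set set \<Rightarrow> ('n set \<Rightarrow> real) \<Rightarrow> real^'n \<Rightarrow> real^'n" where
  "tensor_vec r E s x = (\<chi> v. \<Sum>i\<in>PiE {1..<r} (\<lambda>_. UNIV).
        adj_entry r E s (i(0 := v)) * (\<Prod>j\<in>{1..<r}. x $ i j))"

definition pnorm :: "nat \<Rightarrow> real^'n::finite \<Rightarrow> real" where
  "pnorm p x = (\<Sum>i\<in>UNIV. \<bar>x $ i\<bar> ^ p) powr (1 / real p)"

definition hyp_f :: "nat \<Rightarrow> nat \<Rightarrow> 'n::finite set set \<Rightarrow> ('n set \<Rightarrow> real) \<Rightarrow> real^'n \<Rightarrow> real" where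
  "hyp_f r p E s x = fact (r - 1) * tensor_form r E s x / pnorm p x ^ r"

definition hyp_grad :: "nat \<Rightarrow> nat \<Rightarrow> 'n::finite set set \<Rightarrow> ('n set \<Rightarrow> real) \<Rightarrow> real^'n \<Rightarrow> real^'n" where
  "hyp_grad r p E s x = (fact r / pnorm p x ^ r) *\<^sub>R
     (tensor_vec r E s x - (tensor_form r E s x / pnorm p x ^ p) *\<^sub>R
        (\<chi> i. \<bar>x $ i\<bar> ^ (p - 1) * sgn (x $ i)))"

definition x_next :: "real^'n::finite \<Rightarrow> real^'n \<Rightarrow> real \<Rightarrow> real^'n" where
  "x_next xk pk \<alpha> =
     (1 / (4 + (norm (\<alpha> *\<^sub>R pk))\<^sup>2 - (\<alpha> * (xk \<bullet> pk))\<^sup>2)) *\<^sub>R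
       ((((2 - \<alpha> * (xk \<bullet> pk))\<^sup>2 - (norm (\<alpha> *\<^sub>R pk))\<^sup>2) *\<^sub>R xk) + (4 * \<alpha>) *\<^sub>R pk)"

end

theory Submission
  imports Defs "HOL-Combinatorics.Permutations"
begin

text \<open>
  The function \<open>f\<close> is homogeneous of degree \<open>0\<close>, so its gradient is orthogonal to the
  point: \<open>\<nabla>f(y)\<^sup>T y = 0\<close> (Euler's identity, using \<open>\<A>x\<^sup>r = (\<A>x\<^sup>r\<^sup>-\<^sup>1)\<^sup>T x\<close> by symmetry of
  the adjacency tensor). Writing \<open>x\<^sub>k\<^sub>+\<^sub>1(\<alpha>) = N(\<alpha>) / D(\<alpha>)\<close> with numerator \<open>N\<close> and
  denominator \<open>D\<close>, one checks \<open>\<alpha> N'(\<alpha>) = N(\<alpha>) - D(\<alpha>) x\<^sub>k\<close>, hence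
  \<open>\<alpha> x\<^sub>k\<^sub>+\<^sub>1'(\<alpha>) = c x\<^sub>k\<^sub>+\<^sub>1(\<alpha>) - x\<^sub>k\<close> for some scalar \<open>c\<close>. The chain rule and Euler's identity
  then give \<open>\<alpha> f'(\<alpha>) = -\<nabla>f(x\<^sub>k\<^sub>+\<^sub>1(\<alpha>))\<^sup>T x\<^sub>k\<close>.
\<close>

lemma sum_PiE_insert:
  assumes "a \<notin> I"
  shows "(\<Sum>i\<in>PiE (insert a I) B. F i) = (\<Sum>v\<in>B a. \<Sum>i\<in>PiE I B. F (i(a := v)))"
proof -
  have "(\<Sum>i\<in>PiE (insert a I) B. F i) = (\<Sum>(v, i)\<in>B a \<times> PiE I B. F (i(a := v)))"
    unfolding PiE_insert_eq
    by (subst sum.reindex[OF inj_combinator[OF assms]]) (simp add: case_prod_unfold)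
  then show ?thesis
    by (simp add: sum.cartesian_product)
qed

lemma sum_PiE_comp_permutes:
  assumes "\<sigma> permutes A"
  shows "(\<Sum>i\<in>PiE A (\<lambda>_. B). F (i \<circ> \<sigma>)) = (\<Sum>i\<in>PiE A (\<lambda>_. B). F i)"
proof (rule sum.reindex_bij_witness[of _ "\<lambda>i. i \<circ> inv \<sigma>" "\<lambda>i. i \<circ> \<sigma>"])
  show "i \<circ> \<sigma> \<in> PiE A (\<lambda>_. B)" if "i \<in> PiE A (\<lambda>_. B)" for i
    using that permutes_in_image[OF assms] permutes_not_in[OF assms] by (auto simp: PiE_iff extensional_def)
  show "i \<circ> inv \<sigma> \<in> PiE A (\<lambda>_. B)" if "i \<in> PiE A (\<lambda>_. B)" for i
    using that permutes_in_image[OF permutes_inv[OF assms]] permutes_not_in[OF permutes_inv[OF assms]]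
    by (auto simp: PiE_iff extensional_def)
qed (auto simp: comp_assoc permutes_inv_o[OF assms])

lemma adj_entry_comp_permutes:
  assumes "\<sigma> permutes {0..<r}"
  shows "adj_entry r E s (i \<circ> \<sigma>) = adj_entry r E s i"
  unfolding adj_entry_def image_comp[symmetric] permutes_image[OF assms] ..

lemma inner_tensor_vec:
  fixes x h :: "real^'n::finite"
  assumes "r \<ge> 1"
  shows "tensor_vec r E s x \<bullet> h =
    (\<Sum>i\<in>PiE {0..<r} (\<lambda>_. UNIV). adj_entry r E s i * h $ i 0 * (\<Prod>l\<in>{1..<r}. x $ i l))"
proof -
  have "{0..<r} = insert 0 {1..<r}" using assms by auto
  then have "(\<Sum>i\<in>PiE {0..<r} (\<lambda>_. UNIV). adj_entry r E s i * h $ i 0 * (\<Prod>l\<in>{1..<r}. x $ i l))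
      = (\<Sum>v\<in>UNIV. \<Sum>i\<in>PiE {1..<r} (\<lambda>_. UNIV::'n set).
           adj_entry r E s (i(0 := v)) * h $ v * (\<Prod>l\<in>{1..<r}. x $ i l))"
    by (simp add: sum_PiE_insert)
  also have "\<dots> = tensor_vec r E s x \<bullet> h"
    by (simp add: tensor_vec_def inner_vec_def sum_distrib_left mult_ac)
  finally show ?thesis ..
qed

lemma inner_tensor_vec_at_position:
  fixes x h :: "real^'n::finite"
  assumes "j < r"
  shows "(\<Sum>i\<in>PiE {0..<r} (\<lambda>_. UNIV). adj_entry r E s i * h $ i j * (\<Prod>l\<in>{..<r} - {j}. x $ i l))
    = tensor_vec r E s x \<bullet> h"
proof -
  \<comment> \<open>Swapping index positions \<open>0\<close> and \<open>j\<close> leaves the adjacency entries unchanged.\<close>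
  define \<sigma> where "\<sigma> = Transposition.transpose 0 j"
  have \<sigma>: "\<sigma> permutes {0..<r}" unfolding \<sigma>_def using assms by (simp add: permutes_swap_id)
  have prod: "(\<Prod>l\<in>{1..<r}. x $ i (\<sigma> l)) = (\<Prod>l\<in>{..<r} - {j}. x $ i l)" for i :: "nat \<Rightarrow> 'n"
    by (rule prod.reindex_bij_witness[of _ \<sigma> \<sigma>]) (use assms in \<open>auto simp: \<sigma>_def Transposition.transpose_def\<close>)
  have "(\<Sum>i\<in>PiE {0..<r} (\<lambda>_. UNIV). adj_entry r E s i * h $ i j * (\<Prod>l\<in>{..<r} - {j}. x $ i l))
    = (\<Sum>i\<in>PiE {0..<r} (\<lambda>_. UNIV).
         adj_entry r E s (i \<circ> \<sigma>) * h $ (i \<circ> \<sigma>) 0 * (\<Prod>l\<in>{1..<r}. x $ (i \<circ> \<sigma>) l))"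
    unfolding adj_entry_comp_permutes[OF \<sigma>] o_apply prod by (simp add: \<sigma>_def)
  also have "\<dots> = (\<Sum>i\<in>PiE {0..<r} (\<lambda>_. UNIV). adj_entry r E s i * h $ i 0 * (\<Prod>l\<in>{1..<r}. x $ i l))"
    by (rule sum_PiE_comp_permutes[OF \<sigma>])
  also have "\<dots> = tensor_vec r E s x \<bullet> h"
    using assms by (simp add: inner_tensor_vec)
  finally show ?thesis .
qed

lemma tensor_form_eq_inner:
  fixes x :: "real^'n::finite"
  assumes "r \<ge> 1"
  shows "tensor_form r E s x = tensor_vec r E s x \<bullet> x"
proof -
  have "(\<Prod>l<r. x $ i l) = x $ i 0 * (\<Prod>l\<in>{..<r} - {0}. x $ i l)" for i :: "nat \<Rightarrow> 'n"
    using assms by (subst prod.remove[of _ 0]) auto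
  moreover have "0 < r"
    using assms by simp
  ultimately show ?thesis
    unfolding tensor_form_def inner_tensor_vec_at_position[OF \<open>0 < r\<close>, symmetric]
    by (simp add: mult.assoc)
qed

lemma tensor_form_has_derivative:
  fixes x :: "real^'n::finite"
  assumes "r \<ge> 1"
  shows "(tensor_form r E s has_derivative (\<lambda>h. real r * (tensor_vec r E s x \<bullet> h))) (at x)"
proof -
  have "(tensor_form r E s has_derivative (\<lambda>h. \<Sum>i\<in>PiE {0..<r} (\<lambda>_. UNIV).
      adj_entry r E s i * (\<Sum>l<r. h $ i l * (\<Prod>m\<in>{..<r} - {l}. x $ i m)))) (at x)"
    unfolding tensor_form_def
    by (intro has_derivative_sum has_derivative_mult_right has_derivative_prod
        bounded_linear_imp_has_derivative bounded_linear_vec_nth)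
  moreover have "(\<Sum>i\<in>PiE {0..<r} (\<lambda>_. UNIV).
      adj_entry r E s i * (\<Sum>l<r. h $ i l * (\<Prod>m\<in>{..<r} - {l}. x $ i m)))
    = (\<Sum>l<r. \<Sum>i\<in>PiE {0..<r} (\<lambda>_. UNIV). adj_entry r E s i * h $ i l * (\<Prod>m\<in>{..<r} - {l}. x $ i m))"
    for h :: "real^'n"
    by (subst sum.swap) (simp add: sum_distrib_left mult.assoc)
  ultimately show ?thesis
    by (simp add: inner_tensor_vec_at_position)
qed

lemma abs_power_has_real_derivative:
  assumes "p \<ge> 2"
  shows "((\<lambda>t::real. \<bar>t\<bar> ^ p) has_real_derivative (real p * \<bar>t\<bar> ^ (p - 1) * sgn t)) (at t)"
proof (cases "t = 0")
  case True
  have "((\<lambda>y::real. \<bar>y\<bar> ^ (p - 1)) \<longlongrightarrow> 0) (at 0)"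
    using assms by (auto intro!: tendsto_eq_intros)
  then have "((\<lambda>y::real. (\<bar>y\<bar> ^ p - \<bar>0\<bar> ^ p) / (y - 0)) \<longlongrightarrow> 0) (at 0)"
  proof (rule Lim_null_comparison[rotated], intro always_eventually allI)
    fix y :: real
    have "\<bar>y\<bar> ^ p = \<bar>y\<bar> ^ (p - 1) * \<bar>y\<bar>"
      using power_minus_mult[of p "\<bar>y\<bar>"] assms by simp
    then show "norm ((\<bar>y\<bar> ^ p - \<bar>0\<bar> ^ p) / (y - 0)) \<le> \<bar>y\<bar> ^ (p - 1)"
      using assms by (cases "y = 0") (auto simp: abs_mult power_abs power_0_left)
  qed
  then show ?thesis
    using True by (simp add: has_field_derivative_iff)
next
  case False
  then consider "t > 0" | "t < 0" by linarith
  then show ?thesis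
  proof cases
    case 1
    have "((\<lambda>t. t ^ p) has_real_derivative (real p * \<bar>t\<bar> ^ (p - 1) * sgn t)) (at t)"
      using 1 by (auto intro!: derivative_eq_intros)
    then show ?thesis
      by (rule has_field_derivative_transform_within_open[where S = "{0<..}"]) (use 1 in auto)
  next
    case 2
    have "((\<lambda>t. (- t) ^ p) has_real_derivative (real p * \<bar>t\<bar> ^ (p - 1) * sgn t)) (at t)"
      using 2 by (auto intro!: derivative_eq_intros)
    then show ?thesis
      by (rule has_field_derivative_transform_within_open[where S = "{..<0}"]) (use 2 in auto)
  qed
qed

definition signed_power :: "nat \<Rightarrow> real^'n::finite \<Rightarrow> real^'n" where
  "signed_power q x = (\<chi> i. \<bar>x $ i\<bar> ^ q * sgn (x $ i))"

lemma inner_signed_power_self: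
  fixes x :: "real^'n::finite"
  shows "signed_power q x \<bullet> x = (\<Sum>i\<in>UNIV. \<bar>x $ i\<bar> ^ Suc q)"
proof -
  have "\<bar>t\<bar> ^ q * sgn t * t = \<bar>t\<bar> ^ Suc q" for t :: real
    by (cases t "0::real" rule: linorder_cases) auto
  then show ?thesis
    unfolding signed_power_def inner_vec_def inner_real_def vec_lambda_beta by presburger
qed

lemma sum_abs_power_has_derivative:
  fixes x :: "real^'n::finite"
  assumes "p \<ge> 2"
  shows "((\<lambda>x. \<Sum>i\<in>UNIV. \<bar>x $ i\<bar> ^ p) has_derivative (\<lambda>h. real p * (signed_power (p - 1) x \<bullet> h))) (at x)"
proof -
  have "((\<lambda>x. \<bar>x $ i\<bar> ^ p) has_derivative (\<lambda>h. (real p * \<bar>x $ i\<bar> ^ (p - 1) * sgn (x $ i)) * h $ i)) (at x)"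
    for i
    using has_derivative_compose[OF bounded_linear_imp_has_derivative[OF bounded_linear_vec_nth]
        abs_power_has_real_derivative[OF assms, unfolded has_field_derivative_def]] .
  then have "((\<lambda>x. \<Sum>i\<in>UNIV. \<bar>x $ i\<bar> ^ p) has_derivative
      (\<lambda>h. \<Sum>i\<in>UNIV. (real p * \<bar>x $ i\<bar> ^ (p - 1) * sgn (x $ i)) * h $ i)) (at x)"
    by (rule has_derivative_sum)
  then show ?thesis
    by (simp add: signed_power_def inner_vec_def sum_distrib_left mult_ac)
qed

lemma pnorm_power:
  fixes x :: "real^'n::finite"
  assumes "p \<ge> 1"
  shows "pnorm p x ^ p = (\<Sum>i\<in>UNIV. \<bar>x $ i\<bar> ^ p)"
  using assms unfolding pnorm_def
  by (simp add: root_powr_inverse[symmetric] sum_nonneg)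

lemma pnorm_pos:
  fixes x :: "real^'n::finite"
  assumes "x \<noteq> 0"
  shows "pnorm p x > 0"
proof -
  obtain i where "x $ i \<noteq> 0"
    using assms by (metis vec_eq_iff zero_index)
  then have "0 < (\<Sum>i\<in>UNIV. \<bar>x $ i\<bar> ^ p)"
    by (intro sum_pos2[of UNIV i]) auto
  then show ?thesis
    by (simp add: pnorm_def)
qed

lemma pnorm_has_derivative:
  fixes x :: "real^'n::finite"
  assumes "x \<noteq> 0" and "p \<ge> 2"
  shows "(pnorm p has_derivative (\<lambda>h. (signed_power (p - 1) x \<bullet> h) / pnorm p x ^ (p - 1))) (at x)"
proof -
  define S where "S = (\<Sum>i\<in>UNIV. \<bar>x $ i\<bar> ^ p)"
  have S_eq: "S = pnorm p x ^ p"
    using pnorm_power[of p x] assms(2) by (simp add: S_def)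
  have S_pos: "S > 0"
    unfolding S_eq using pnorm_pos[OF assms(1)] by simp
  have "(pnorm p has_derivative
      (\<lambda>h. pnorm p x * (0 * ln S + real p * (signed_power (p - 1) x \<bullet> h) * (1 / real p) / S))) (at x)"
    unfolding pnorm_def S_def
    by (rule has_derivative_powr[OF sum_abs_power_has_derivative[OF assms(2)] has_derivative_const])
      (use S_pos assms(2) in \<open>auto simp: S_def\<close>)
  moreover have "pnorm p x * (0 * ln S + real p * v * (1 / real p) / S) = v / pnorm p x ^ (p - 1)" for v
  proof -
    have "pnorm p x ^ (p - 1) * pnorm p x = S"
      unfolding S_eq using assms(2) power_minus_mult[of p "pnorm p x"] by simp
    then show ?thesis
      using S_pos assms(2) by (auto simp: field_simps)
  qed
  ultimately show ?thesis
    by simp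
qed

lemma hyp_grad_eq:
  "hyp_grad r p E s x = (fact r / pnorm p x ^ r) *\<^sub>R
     (tensor_vec r E s x - (tensor_form r E s x / pnorm p x ^ p) *\<^sub>R signed_power (p - 1) x)"
  by (simp add: hyp_grad_def signed_power_def)

lemma hyp_f_has_derivative:
  fixes x :: "real^'n::finite"
  assumes "x \<noteq> 0" and "p \<ge> 2" and "r \<ge> 1"
  shows "(hyp_f r p E s has_derivative (\<lambda>h. hyp_grad r p E s x \<bullet> h)) (at x)"
proof -
  define N where "N = pnorm p x"
  define w where "w = signed_power (p - 1) x"
  obtain r' where r': "r = Suc r'" using assms(3) by (cases r) auto
  obtain p' where p': "p = Suc p'" using assms(2) by (cases p) auto
  have N: "N > 0" unfolding N_def by (rule pnorm_pos[OF assms(1)])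
  have D: "(hyp_f r p E s has_derivative (\<lambda>h.
      - (fact (r - 1) * tensor_form r E s x) *
        (inverse (N ^ r) * (of_nat r * ((w \<bullet> h) / N ^ (p - 1)) * N ^ (r - 1)) * inverse (N ^ r))
      + fact (r - 1) * (real r * (tensor_vec r E s x \<bullet> h)) / N ^ r)) (at x)"
    unfolding hyp_f_def[abs_def] N_def w_def
    by (rule has_derivative_divide[OF has_derivative_mult_right[OF tensor_form_has_derivative[OF assms(3)]]
        has_derivative_power[OF pnorm_has_derivative[OF assms(1,2)]]]) (use N N_def in simp)
  show ?thesis
    unfolding hyp_grad_eq N_def[symmetric] w_def[symmetric]
    by (rule has_derivative_eq_rhs[OF D]) (use N in \<open>simp add: fun_eq_iff inner_diff_left field_simps r' p'\<close>)
qed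

lemma inner_hyp_grad_self:
  fixes x :: "real^'n::finite"
  assumes "x \<noteq> 0" and "p \<ge> 1" and "r \<ge> 1"
  shows "hyp_grad r p E s x \<bullet> x = 0"
proof -
  have "signed_power (p - 1) x \<bullet> x = pnorm p x ^ p"
    using assms(2) by (simp add: inner_signed_power_self pnorm_power)
  then show ?thesis
    using pnorm_pos[OF assms(1), of p]
    by (simp add: hyp_grad_eq inner_diff_left tensor_form_eq_inner[OF assms(3)])
qed

definition x_next_num :: "real^'n::finite \<Rightarrow> real^'n \<Rightarrow> real \<Rightarrow> real^'n" where
  "x_next_num xk pk a = ((2 - a * (xk \<bullet> pk))\<^sup>2 - a\<^sup>2 * (pk \<bullet> pk)) *\<^sub>R xk + (4 * a) *\<^sub>R pk"

definition x_next_den :: "real^'n::finite \<Rightarrow> real^'n \<Rightarrow> real \<Rightarrow> real" where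
  "x_next_den xk pk a = 4 + a\<^sup>2 * (pk \<bullet> pk - (xk \<bullet> pk)\<^sup>2)"

lemma x_next_eq: "x_next xk pk a = (1 / x_next_den xk pk a) *\<^sub>R x_next_num xk pk a"
  by (simp add: x_next_def x_next_den_def x_next_num_def power_mult_distrib algebra_simps
      power2_norm_eq_inner[symmetric])

lemma x_next_den_pos:
  fixes xk pk :: "real^'n::finite"
  assumes "norm xk = 1"
  shows "x_next_den xk pk a > 0"
proof -
  have "\<bar>xk \<bullet> pk\<bar> \<le> norm pk"
    using Cauchy_Schwarz_ineq2[of xk pk] assms by simp
  then have "(xk \<bullet> pk)\<^sup>2 \<le> pk \<bullet> pk"
    by (metis abs_ge_zero power2_abs power2_norm_eq_inner power_mono)
  then have "0 \<le> a\<^sup>2 * (pk \<bullet> pk - (xk \<bullet> pk)\<^sup>2)"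
    by simp
  then show ?thesis
    by (simp add: x_next_den_def)
qed

lemma norm_x_next_num:
  fixes xk pk :: "real^'n::finite"
  assumes "norm xk = 1"
  shows "norm (x_next_num xk pk a) = x_next_den xk pk a"
proof -
  have "xk \<bullet> xk = 1"
    using assms by (simp add: power2_norm_eq_inner[symmetric])
  then have "x_next_num xk pk a \<bullet> x_next_num xk pk a = (x_next_den xk pk a)\<^sup>2"
    unfolding x_next_num_def x_next_den_def
    by (simp add: inner_add_left inner_add_right inner_commute power2_eq_square algebra_simps)
  then have "(norm (x_next_num xk pk a))\<^sup>2 = (x_next_den xk pk a)\<^sup>2"
    by (simp add: power2_norm_eq_inner)
  then show ?thesis
    using x_next_den_pos[OF assms, of pk a] by (simp add: power2_eq_iff_nonneg)
qed

lemma norm_x_next: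
  fixes xk pk :: "real^'n::finite"
  assumes "norm xk = 1"
  shows "norm (x_next xk pk a) = 1"
  using x_next_den_pos[OF assms, of pk a] by (simp add: x_next_eq norm_x_next_num[OF assms])

lemma x_next_num_has_vector_derivative:
  "(x_next_num xk pk has_vector_derivative
     (- 2 * (xk \<bullet> pk) * (2 - a * (xk \<bullet> pk)) - 2 * a * (pk \<bullet> pk)) *\<^sub>R xk + 4 *\<^sub>R pk) (at a)"
  unfolding x_next_num_def
  by (auto intro!: derivative_eq_intros simp: power2_eq_square algebra_simps)

lemma x_next_den_has_real_derivative:
  "(x_next_den xk pk has_real_derivative 2 * a * (pk \<bullet> pk - (xk \<bullet> pk)\<^sup>2)) (at a)"
  unfolding x_next_den_def
  by (auto intro!: derivative_eq_intros simp: power2_eq_square)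

lemma x_next_has_vector_derivative_radial:
  fixes xk pk :: "real^'n::finite"
  assumes "norm xk = 1"
  shows "\<exists>y' c. (x_next xk pk has_vector_derivative y') (at a) \<and> a *\<^sub>R y' = c *\<^sub>R x_next xk pk a - xk"
proof -
  define D where "D = x_next_den xk pk a"
  define D' where "D' = 2 * a * (pk \<bullet> pk - (xk \<bullet> pk)\<^sup>2)"
  define V where "V = x_next_num xk pk a"
  define V' where "V' = (- 2 * (xk \<bullet> pk) * (2 - a * (xk \<bullet> pk)) - 2 * a * (pk \<bullet> pk)) *\<^sub>R xk + 4 *\<^sub>R pk"
  have D: "D > 0"
    unfolding D_def by (rule x_next_den_pos[OF assms])
  have "((\<lambda>a. 1 / x_next_den xk pk a) has_real_derivative - D' / D\<^sup>2) (at a)"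
    using x_next_den_has_real_derivative[of xk pk a] D
    by (auto intro!: derivative_eq_intros simp: D_def D'_def power2_eq_square)
  from has_vector_derivative_scaleR[OF this x_next_num_has_vector_derivative]
  have deriv: "(x_next xk pk has_vector_derivative (1 / D) *\<^sub>R V' - (D' / D\<^sup>2) *\<^sub>R V) (at a)"
    by (simp add: x_next_eq[abs_def] D_def V_def V'_def)
  have aV': "a *\<^sub>R V' = V - D *\<^sub>R xk"
  proof -
    have "a * (- 2 * (xk \<bullet> pk) * (2 - a * (xk \<bullet> pk)) - 2 * a * (pk \<bullet> pk))
        = ((2 - a * (xk \<bullet> pk))\<^sup>2 - a\<^sup>2 * (pk \<bullet> pk)) - D"
      by (simp add: D_def x_next_den_def power2_eq_square algebra_simps)
    then show ?thesis
      unfolding V_def V'_def x_next_num_def scaleR_add_right scaleR_scaleR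
      by (simp add: scaleR_diff_left)
  qed
  have "a *\<^sub>R ((1 / D) *\<^sub>R V' - (D' / D\<^sup>2) *\<^sub>R V) = (1 / D) *\<^sub>R (a *\<^sub>R V') - (a * D' / D\<^sup>2) *\<^sub>R V"
    by (simp add: scaleR_diff_right)
  also have "\<dots> = (1 / D) *\<^sub>R V - xk - (a * D' / D\<^sup>2) *\<^sub>R V"
    using D by (simp add: aV' scaleR_diff_right)
  also have "\<dots> = (1 - a * D' / D) *\<^sub>R x_next xk pk a - xk"
    using D by (simp add: x_next_eq D_def[symmetric] V_def[symmetric] scaleR_diff_left[symmetric]
        power2_eq_square diff_divide_distrib)
  finally show ?thesis
    using deriv by blast
qed

theorem lemma3p4:
  fixes E :: "'n::finite set set" and s :: "'n set \<Rightarrow> real"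
    and r p :: nat and xk pk :: "real^'n" and \<alpha> :: real
  assumes "r \<ge> 2" and "p \<ge> 2"
    and "weighted_uniform_hypergraph r E s"
    and "norm xk = 1"
    and "\<alpha> > 0"
  shows "\<exists>D. ((\<lambda>a. hyp_f r p E s (x_next xk pk a)) has_real_derivative D) (at \<alpha>)
           \<and> \<alpha> * D = - (hyp_grad r p E s (x_next xk pk \<alpha>) \<bullet> xk)"
proof -
  obtain y' c where y': "(x_next xk pk has_vector_derivative y') (at \<alpha>)"
    and radial: "\<alpha> *\<^sub>R y' = c *\<^sub>R x_next xk pk \<alpha> - xk"
    using x_next_has_vector_derivative_radial[OF assms(4)] by blast
  define G where "G = hyp_grad r p E s (x_next xk pk \<alpha>)"
  have nonzero: "x_next xk pk \<alpha> \<noteq> 0"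
    using norm_x_next[OF assms(4), of pk \<alpha>] by auto
  have "((\<lambda>a. hyp_f r p E s (x_next xk pk a)) has_derivative (\<lambda>t. G \<bullet> (t *\<^sub>R y'))) (at \<alpha>)"
    unfolding G_def using assms(1,2)
    by (intro has_derivative_compose[OF y'[unfolded has_vector_derivative_def]] hyp_f_has_derivative nonzero) auto
  then have "((\<lambda>a. hyp_f r p E s (x_next xk pk a)) has_real_derivative G \<bullet> y') (at \<alpha>)"
    by (simp add: has_field_derivative_def mult.commute[of _ "G \<bullet> y'"])
  moreover have "G \<bullet> x_next xk pk \<alpha> = 0"
    unfolding G_def using assms(1,2) by (intro inner_hyp_grad_self nonzero) auto
  then have "\<alpha> * (G \<bullet> y') = - (G \<bullet> xk)"
    using arg_cong[OF radial, of "inner G"] by (simp add: inner_diff_right)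
  ultimately show ?thesis
    unfolding G_def by blast
qed

end
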